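(* The function $\mathcal{I}\colon[0,1]\cap\mathbb{Q}\to\mathbb{R}$ extends uniquely to a continuous, strictly increasing function $\mathcal{I}\colon[0,1]\to\mathbb{R}$. Moreover, for all real $x\in[0,1]$ the extension satisfies $\mathcal{I}(0)=0$, $\mathcal{I}(x)=4^{-\lfloor1/x\rfloor}\big(1-2\,\mathcal{I}(\{1/x\})\big)$ if $0<x\le\tfrac12$, and $\mathcal{I}(x)=\tfrac38-\tfrac34\,\mathcal{I}(1/x-1)-\tfrac12\,\mathcal{I}(1-x)$ if $\tfrac12<x\le1$.
   Context: For $x\in\mathbb{R}$ let $\{x\}=x-\lfloor x\rfloor$. The interrobang function $\mathcal{I}\colon[0,1]\cap\mathbb{Q}\to\mathbb{R}$ is defined recursively by $\mathcal{I}(0)=0$; $\mathcal{I}(x)=4^{-\lfloor1/x\rfloor}\big(1-2\,\mathcal{I}(\{1/x\})\big)$ if $0<x\le\tfrac12$; and $\mathcal{I}(x)=\tfrac38-\tfrac34\,\mathcal{I}(1/x-1)-\tfrac12\,\mathcal{I}(1-x)$ if $\tfrac12<x\le1$. The recursion is well founded: with the height $a/b\mapsto|a|+|b|$ ($\gcd(a,b)=1$), every argument on the right-hand side has strictly smaller height than $x$, so $\mathcal{I}$ is uniquely defined. *)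

theory Defs
  imports "HOL-Analysis.Analysis"
begin

definition rat_height :: "rat \<Rightarrow> nat" where
  "rat_height r = (case quotient_of r of (a, b) \<Rightarrow> nat \<bar>a\<bar> + nat \<bar>b\<bar>)"

lemma rat_height_Fract_le:
  assumes "b > 0"
  shows "rat_height (Fract a b) \<le> nat \<bar>a\<bar> + nat b"
proof -
  define c where "c = gcd a b"
  have c: "c \<ge> 1" using assms c_def by (simp add: int_one_le_iff_zero_less)
  have q: "quotient_of (Fract a b) = (a div c, b div c)"
    using assms by (simp add: quotient_of_Fract normalize_def c_def Let_def)
  have "\<bar>a div c\<bar> \<le> \<bar>a\<bar>"
  proof (cases "a \<ge> 0")
    case True
    have "a div c \<le> a" using True by (cases "a = 0") (auto intro: int_div_le_self)
    moreover have "a div c \<ge> 0" using True c by (simp add: pos_imp_zdiv_nonneg_iff)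
    ultimately show ?thesis using True by simp
  next
    case False
    have "a div c \<ge> a" using c False by (smt (verit) div_by_1 zdiv_mono2_neg)
    moreover have "a div c \<le> 0" using c False by (simp add: div_nonpos_pos_le0)
    ultimately show ?thesis using False by simp
  qed
  moreover have "\<bar>b div c\<bar> \<le> b" using c assms
    by (simp add: int_div_le_self pos_imp_zdiv_nonneg_iff)
  ultimately have "nat \<bar>a div c\<bar> + nat \<bar>b div c\<bar> \<le> nat \<bar>a\<bar> + nat b"
    by linarith
  then show ?thesis by (simp add: rat_height_def q)
qed

lemma rat_height_aux_a: "(q::int) > 0 \<Longrightarrow> of_int p / of_int q \<le> (1/2::rat) \<Longrightarrow> 2*p \<le> q"
proof -
  assume "q>0" "of_int p / of_int q \<le> (1/2::rat)"
  then have "rat_of_int (2*p) \<le> rat_of_int q" by (simp add: field_simps)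
  then show ?thesis by linarith
qed
lemma rat_height_aux_b: "(q::int) > 0 \<Longrightarrow> of_int p / of_int q \<le> (1::rat) \<Longrightarrow> p \<le> q"
proof -
  assume "q>0" "of_int p / of_int q \<le> (1::rat)"
  then have "rat_of_int p \<le> rat_of_int q" by (simp add: field_simps)
  then show ?thesis by linarith
qed
lemma rat_height_aux_c: "(q::int) > 0 \<Longrightarrow> (1/2::rat) < of_int p / of_int q \<Longrightarrow> q < 2*p"
proof -
  assume "q>0" "(1/2::rat) < of_int p / of_int q"
  then have "rat_of_int q < rat_of_int (2*p)" by (simp add: field_simps)
  then show ?thesis by linarith
qed
lemma rat_height_aux_d: "(q::int) > 0 \<Longrightarrow> (0::rat) < of_int p / of_int q \<Longrightarrow> 0 < p"
  by (simp add: zero_less_divide_iff)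

text \<open>The interrobang function on rationals. Outside [0,1] it is set to 0
  (junk value, irrelevant to the statement).\<close>
function interrobang_rat :: "rat \<Rightarrow> real" where
  "interrobang_rat x =
     (if x \<le> 0 \<or> x > 1 then 0
      else if x \<le> 1/2 then
        4 powr (- real_of_int \<lfloor>1 / x\<rfloor>) * (1 - 2 * interrobang_rat (frac (1 / x)))
      else 3/8 - 3/4 * interrobang_rat (1 / x - 1) - 1/2 * interrobang_rat (1 - x))"
  by auto
termination
proof (relation "Wellfounded.measure rat_height", goal_cases)
  case 1 then show ?case by simp
next
  case (2 x)
  obtain p q where qo: "quotient_of x = (p, q)" by (cases "quotient_of x") auto
  have q0: "q > 0" using qo by (rule quotient_of_denom_pos)
  have xq: "x = of_int p / of_int q" using qo by (rule quotient_of_div)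
  have x: "x = Fract p q" using xq by (simp add: Fract_of_int_quotient)
  have xr: "0 < x" "x \<le> 1" using 2 by (auto simp: not_le)
  have pp: "p > 0" using rat_height_aux_d[OF q0 xr(1)[unfolded xq]] .
  have pq: "p \<le> q" using rat_height_aux_b[OF q0 xr(2)[unfolded xq]] .
  have hx: "rat_height x = nat p + nat q" using qo pp q0 by (simp add: rat_height_def)
  have "frac (1 / x) = Fract q p - of_int (q div p)"
    using x by (simp add: frac_def divide_inverse)
  also have "\<dots> = Fract (q mod p) p"
  proof -
    have e: "q - q div p * p = q mod p" by (rule minus_div_mult_eq_mod)
    show ?thesis using pp by (simp add: of_int_rat diff_rat e)
  qed
  finally have f: "frac (1 / x) = Fract (q mod p) p" .
  have "rat_height (frac (1/x)) \<le> nat \<bar>q mod p\<bar> + nat p"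
    unfolding f using pp by (rule rat_height_Fract_le)
  moreover have "q mod p < p" using pp by simp
  moreover have "q mod p \<ge> 0" using pp by simp
  ultimately have "nat \<bar>q mod p\<bar> < nat q" using pq by simp
  with \<open>rat_height (frac (1/x)) \<le> nat \<bar>q mod p\<bar> + nat p\<close>
  have "rat_height (frac (1/x)) < nat p + nat q" by linarith
  then show ?case using hx by simp
next
  case (3 x)
  obtain p q where qo: "quotient_of x = (p, q)" by (cases "quotient_of x") auto
  have q0: "q > 0" using qo by (rule quotient_of_denom_pos)
  have xq: "x = of_int p / of_int q" using qo by (rule quotient_of_div)
  have x: "x = Fract p q" using xq by (simp add: Fract_of_int_quotient)
  have xr: "0 < x" "x \<le> 1" using 3 by (auto simp: not_le)
  have pp: "p > 0" using rat_height_aux_d[OF q0 xr(1)[unfolded xq]] .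
  have pq: "p \<le> q" using rat_height_aux_b[OF q0 xr(2)[unfolded xq]] .
  have hx: "rat_height x = nat p + nat q" using qo pp q0 by (simp add: rat_height_def)
  have f: "1 / x - 1 = Fract (q - p) p"
    using x pp by (simp add: divide_inverse One_rat_def)
  have "rat_height (1 / x - 1) \<le> nat \<bar>q - p\<bar> + nat p"
    unfolding f using pp by (rule rat_height_Fract_le)
  then show ?case using hx pp q0 pq by simp
next
  case (4 x)
  obtain p q where qo: "quotient_of x = (p, q)" by (cases "quotient_of x") auto
  have q0: "q > 0" using qo by (rule quotient_of_denom_pos)
  have xq: "x = of_int p / of_int q" using qo by (rule quotient_of_div)
  have x: "x = Fract p q" using xq by (simp add: Fract_of_int_quotient)
  have xr: "0 < x" "x \<le> 1" using 4 by (auto simp: not_le)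
  have pp: "p > 0" using rat_height_aux_d[OF q0 xr(1)[unfolded xq]] .
  have pq: "p \<le> q" using rat_height_aux_b[OF q0 xr(2)[unfolded xq]] .
  have hx: "rat_height x = nat p + nat q" using qo pp q0 by (simp add: rat_height_def)
  have xh: "1/2 < x" using 4 by (auto simp: not_le)
  have half: "q < 2 * p" using rat_height_aux_c[OF q0 xh[unfolded xq]] .
  have f: "1 - x = Fract (q - p) q"
    using x q0 by (simp add: One_rat_def)
  have "rat_height (1 - x) \<le> nat \<bar>q - p\<bar> + nat q"
    unfolding f using q0 by (rule rat_height_Fract_le)
  then show ?case using hx pp q0 pq half by simp
qed

end

theory Submission
  imports Defs
begin

text \<open>The recursion says that the interrobang function is a fixed point of an operator
  \<open>T\<close> on functions on [0,1]. \<open>T\<close> preserves the continuous nondecreasing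
  functions taking the values 0, 1/16, 3/8 at 0, 1/2, 1, and it is a contraction with
  factor 7/8 for the sup norm weighted by 1/4 on [0,1/2] and by 1 on (1/2,1]. Hence the
  iterates of \<open>T\<close> converge uniformly to a continuous nondecreasing fixed point \<open>F\<close>.
  Any fixed point satisfies the recursion, so by induction on the height it agrees with
  the interrobang function on the rationals, and continuity makes it unique.
  Finally \<open>F\<close> is constant on no interval: on [1/(n+1),1/n] the first equation transports a
  flat interval along \<open>x \<mapsto> 1/x - n\<close>, which stretches lengths by at least 4 on [0,1/2], and
  the second equation reflects flat intervals in [1/2,1] to [0,1/2]; so the length of
  a flat interval could be doubled forever.\<close>

lemma continuous_within_if_continuous_on_nhd:
  fixes f :: "'a::t2_space \<Rightarrow> 'b::topological_space"
  assumes "continuous_on T f" "x \<in> T" "open U" "x \<in> U" "U \<inter> S \<subseteq> T"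
  shows "continuous (at x within S) f"
proof -
  have "at x within S = at x within (U \<inter> S)"
    by (rule at_within_nhd[OF assms(4,3)]) blast
  moreover have "continuous (at x within (U \<inter> S)) f"
    using assms(1,2,5) continuous_on_eq_continuous_within continuous_within_subset by blast
  ultimately show ?thesis unfolding continuous_within by simp
qed

lemma uniformly_convergent_on_if_summable_increments:
  fixes f :: "nat \<Rightarrow> 'a \<Rightarrow> 'b::banach"
  assumes "\<And>n x. x \<in> S \<Longrightarrow> norm (f (Suc n) x - f n x) \<le> M n" "summable M"
  shows "uniformly_convergent_on S f"
proof -
  have "uniform_limit S (\<lambda>n x. \<Sum>i<n. f (Suc i) x - f i x) (\<lambda>x. \<Sum>i. f (Suc i) x - f i x) sequentially"
    by (rule Weierstrass_m_test[OF assms])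
  then have "uniform_limit S (\<lambda>n x. f 0 x + (\<Sum>i<n. f (Suc i) x - f i x))
      (\<lambda>x. f 0 x + (\<Sum>i. f (Suc i) x - f i x)) sequentially"
    by (intro uniform_limit_add uniform_limit_const)
  moreover have "(\<lambda>n x. f 0 x + (\<Sum>i<n. f (Suc i) x - f i x)) = f"
    by (simp add: sum_lessThan_telescope[of "\<lambda>i. f i _"])
  ultimately show ?thesis unfolding uniformly_convergent_on_def by auto
qed

lemma continuous_on_Icc_eq_if_eq_on_rats:
  fixes f g :: "real \<Rightarrow> real"
  assumes "a < b" "continuous_on {a..b} f" "continuous_on {a..b} g"
    and eq: "\<And>q. a \<le> of_rat q \<Longrightarrow> of_rat q \<le> b \<Longrightarrow> f (of_rat q) = g (of_rat q)"
    and "x \<in> {a..b}"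
  shows "f x = g x"
proof -
  have eq_Rats: "f y = g y" if "y \<in> {a..b} \<inter> \<rat>" for y
    using that eq by (auto elim: Rats_cases)
  have closure: "closure ({a..b} \<inter> \<rat>) = {a..b}"
    using assms(1) by (simp add: closure_convex_Int_superset Rats_closure_real)
  have "(\<lambda>x. f x - g x) x = 0"
    by (rule continuous_constant_on_closure[where S = "{a..b} \<inter> \<rat>"])
      (use assms closure eq_Rats in \<open>auto intro: continuous_intros\<close>)
  then show ?thesis by simp
qed

lemma frac_in_unit_interval: "frac (y::real) \<in> {0..1}"
  using frac_lt_1[of y] by (simp add: frac_ge_0 less_imp_le)

lemma four_powr_neg_plus_1: "(4::real) powr (- real_of_int (n + 1)) = 4 powr (- real_of_int n) / 4"
  by (simp add: powr_diff)

lemma four_powr_neg_mono: "m \<le> n \<Longrightarrow> (4::real) powr (- real_of_int n) \<le> 4 powr (- real_of_int m)"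
  by (intro powr_mono) auto

lemma four_powr_neg_le_1_16: "2 \<le> n \<Longrightarrow> (4::real) powr (- real_of_int n) \<le> 1/16"
  using four_powr_neg_mono[of 2 n] by (simp add: powr_minus powr_numeral)

lemma four_powr_neg_floor_inverse_less:
  assumes "0 < x"
  shows "(4::real) powr (- real_of_int \<lfloor>1/x\<rfloor>) < x"
proof -
  define m where "m = nat \<lfloor>1/x\<rfloor>"
  have m: "real_of_int \<lfloor>1/x\<rfloor> = real m" using assms by (simp add: m_def)
  have "1/x < real m + 1" using m by linarith
  also have "\<dots> \<le> 4 ^ m" by (induction m) auto
  finally have "1 / 4 ^ m < x" using assms by (simp add: field_simps)
  moreover have "(4::real) powr (- real_of_int \<lfloor>1/x\<rfloor>) = 1 / 4 ^ m"
    unfolding m by (simp add: powr_minus powr_realpow divide_inverse)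
  ultimately show ?thesis by simp
qed

lemma floor_inverse_eq:
  fixes n :: nat
  assumes "n \<ge> 1" "1/(real n + 1) < x" "x \<le> 1/real n"
  shows "\<lfloor>1/x\<rfloor> = int n"
proof -
  have "x > 0" by (rule less_trans[OF _ assms(2)]) simp
  then show ?thesis using assms by (intro floor_unique) (simp_all add: field_simps)
qed

lemma floor_inverse_ge_2: "0 < x \<Longrightarrow> x \<le> 1/2 \<Longrightarrow> \<lfloor>1/x\<rfloor> \<ge> 2"
  by (simp add: le_floor_iff field_simps)

lemma obtain_inverse_piece:
  fixes x :: real
  assumes "0 < x" "x \<le> 1"
  obtains n :: nat where "n \<ge> 1" "\<lfloor>1/x\<rfloor> = int n" "1/(real n + 1) < x" "x \<le> 1/real n"
proof
  define n where "n = nat \<lfloor>1/x\<rfloor>"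
  have "1 \<le> \<lfloor>1/x\<rfloor>" using assms by (simp add: le_floor_iff)
  then show "n \<ge> 1" unfolding n_def using nat_mono by fastforce
  then show n: "\<lfloor>1/x\<rfloor> = int n" using assms by (simp add: n_def)
  show "1/(real n + 1) < x" "x \<le> 1/real n"
    using n \<open>n \<ge> 1\<close> assms floor_correct[of "1/x"] by (simp_all add: field_simps)
qed

lemma inverse_piece_bounds:
  fixes n :: nat
  assumes "n \<ge> 1" "1/(real n + 1) \<le> x" "x \<le> 1/real n"
  shows "0 < x" "0 \<le> 1/x - real n" "1/x - real n \<le> 1"
proof -
  show x: "0 < x" by (rule less_le_trans[OF _ assms(2)]) simp
  show "0 \<le> 1/x - real n" "1/x - real n \<le> 1" using assms x by (simp_all add: field_simps)
qed

section \<open>The operator behind the recursion\<close>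

definition interrobang_op :: "(real \<Rightarrow> real) \<Rightarrow> real \<Rightarrow> real" where
  "interrobang_op g x = (if x \<le> 0 \<or> x > 1 then 0
      else if x \<le> 1/2 then 4 powr (- real_of_int \<lfloor>1 / x\<rfloor>) * (1 - 2 * g (frac (1 / x)))
      else 3/8 - 3/4 * g (1 / x - 1) - 1/2 * g (1 - x))"

lemma interrobang_op_0 [simp]: "interrobang_op g 0 = 0"
  by (simp add: interrobang_op_def)

lemma interrobang_op_le_half:
  "0 < x \<Longrightarrow> x \<le> 1/2 \<Longrightarrow>
    interrobang_op g x = 4 powr (- real_of_int \<lfloor>1 / x\<rfloor>) * (1 - 2 * g (frac (1 / x)))"
  by (simp add: interrobang_op_def)

lemma interrobang_op_gt_half:
  "1/2 < x \<Longrightarrow> x \<le> 1 \<Longrightarrow> interrobang_op g x = 3/8 - 3/4 * g (1 / x - 1) - 1/2 * g (1 - x)"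
  by (simp add: interrobang_op_def)

text \<open>These are the values that the recursion forces at 0, 1/2 and 1.\<close>

definition anchored :: "(real \<Rightarrow> real) \<Rightarrow> bool" where
  "anchored g \<longleftrightarrow> g 0 = 0 \<and> g (1/2) = 1/16 \<and> g 1 = 3/8"

definition admissible :: "(real \<Rightarrow> real) \<Rightarrow> bool" where
  "admissible g \<longleftrightarrow> anchored g \<and> mono_on {0..1} g \<and> continuous_on {0..1} g"

lemma interrobang_op_on_piece:
  fixes n :: nat
  assumes g: "g 0 = 0" "g 1 = 3/8" and n: "n \<ge> 2" and x: "1/(real n + 1) \<le> x" "x \<le> 1/real n"
  shows "interrobang_op g x = 4 powr (- real n) * (1 - 2 * g (1/x - real n))"
proof -
  have x0: "0 < x" using inverse_piece_bounds(1)[of n x] n x by simp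
  have "1/real n \<le> 1/2" using n by (simp add: field_simps)
  then have xh: "x \<le> 1/2" using x(2) by linarith
  show ?thesis
  proof (cases "x = 1/(real n + 1)")
    case True
    have "\<lfloor>1/x\<rfloor> = int n + 1" "g (frac (1/x)) = 0" "1/x - real n = 1"
      using True g by (simp_all add: frac_def)
    then have "interrobang_op g x = 4 powr (- real_of_int (int n + 1))"
      using interrobang_op_le_half[OF x0 xh] by simp
    also have "\<dots> = 4 powr (- real n) / 4" using four_powr_neg_plus_1[of "int n"] by simp
    finally show ?thesis by (simp add: \<open>1/x - real n = 1\<close> g(2))
  next
    case False
    then have "\<lfloor>1/x\<rfloor> = int n" using floor_inverse_eq n x by simp
    then show ?thesis using interrobang_op_le_half[OF x0 xh] by (simp add: frac_def)
  qed
qed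

lemma interrobang_op_ge_half:
  assumes g: "anchored g" and x: "1/2 \<le> x" "x \<le> 1"
  shows "interrobang_op g x = 3/8 - 3/4 * g (1/x - 1) - 1/2 * g (1 - x)"
proof (cases "x = 1/2")
  case True
  have "interrobang_op g (1/2) = 1/16"
    using g interrobang_op_le_half[of "1/2" g] by (simp add: anchored_def frac_def powr_minus powr_numeral)
  then show ?thesis using g unfolding True by (simp add: anchored_def)
qed (use x interrobang_op_gt_half in auto)

lemma anchored_interrobang_op: "g 0 = 0 \<Longrightarrow> anchored (interrobang_op g)"
  using interrobang_op_le_half[of "1/2" g] interrobang_op_gt_half[of 1 g]
  by (simp add: anchored_def frac_def powr_minus powr_numeral)

lemma anchored_mono_on_range:
  assumes "anchored g" "mono_on {0..1} g" "x \<in> {0..1}"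
  shows "0 \<le> g x" "g x \<le> 3/8"
  using assms mono_onD[of "{0..1}" g 0 x] mono_onD[of "{0..1}" g x 1] by (auto simp: anchored_def)

lemma interrobang_op_le_half_bounds:
  assumes g: "anchored g" "mono_on {0..1} g" and x: "0 < x" "x \<le> 1/2"
  shows "4 powr (- real_of_int (\<lfloor>1/x\<rfloor> + 1)) \<le> interrobang_op g x"
    "interrobang_op g x \<le> 4 powr (- real_of_int \<lfloor>1/x\<rfloor>)"
proof -
  define p where "p = (4::real) powr (- real_of_int \<lfloor>1/x\<rfloor>)"
  have "0 \<le> g (frac (1/x))" "g (frac (1/x)) \<le> 3/8"
    using anchored_mono_on_range[OF g frac_in_unit_interval] by auto
  moreover have "p > 0" by (simp add: p_def)
  ultimately have "p / 4 \<le> p * (1 - 2 * g (frac (1/x)))" "p * (1 - 2 * g (frac (1/x))) \<le> p"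
    by (simp_all add: mult_left_le)
  moreover have "interrobang_op g x = p * (1 - 2 * g (frac (1/x)))"
    using interrobang_op_le_half[OF x] by (simp add: p_def)
  moreover have "4 powr (- real_of_int (\<lfloor>1/x\<rfloor> + 1)) = p / 4"
    unfolding p_def by (rule four_powr_neg_plus_1)
  ultimately show "4 powr (- real_of_int (\<lfloor>1/x\<rfloor> + 1)) \<le> interrobang_op g x"
    "interrobang_op g x \<le> 4 powr (- real_of_int \<lfloor>1/x\<rfloor>)"
    unfolding p_def[symmetric] by linarith+
qed

lemma interrobang_op_le_half_range:
  assumes g: "anchored g" "mono_on {0..1} g" and x: "0 \<le> x" "x \<le> 1/2"
  shows "0 \<le> interrobang_op g x" "interrobang_op g x \<le> 1/16"
proof -
  have "0 \<le> interrobang_op g x \<and> interrobang_op g x \<le> 1/16"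
  proof (cases "x = 0")
    case False
    then have "0 < x" using x by simp
    then show ?thesis
      using interrobang_op_le_half_bounds[OF g \<open>0 < x\<close> x(2)]
        four_powr_neg_le_1_16[OF floor_inverse_ge_2[OF \<open>0 < x\<close> x(2)]]
        powr_ge_zero[of 4 "- real_of_int (\<lfloor>1/x\<rfloor> + 1)"]
      by linarith
  qed simp
  then show "0 \<le> interrobang_op g x" "interrobang_op g x \<le> 1/16" by auto
qed

lemma interrobang_op_gt_half_range:
  assumes g: "anchored g" "mono_on {0..1} g" and x: "1/2 < x" "x \<le> 1"
  shows "1/16 \<le> interrobang_op g x" "interrobang_op g x \<le> 3/8"
proof -
  have "1/x - 1 \<in> {0..1}" "1 - x \<in> {0..1}" using x by (auto simp: field_simps)
  then have "0 \<le> g (1/x - 1)" "g (1/x - 1) \<le> 3/8" "0 \<le> g (1 - x)"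
    using anchored_mono_on_range[OF g] by auto
  moreover have "g (1 - x) \<le> 1/16"
    using g mono_onD[of "{0..1}" g "1 - x" "1/2"] x by (auto simp: anchored_def)
  ultimately show "1/16 \<le> interrobang_op g x" "interrobang_op g x \<le> 3/8"
    using interrobang_op_gt_half[OF x] by simp_all
qed

lemma mono_on_interrobang_op:
  assumes g: "anchored g" "mono_on {0..1} g"
  shows "mono_on {0..1} (interrobang_op g)"
proof (rule mono_onI)
  fix x y :: real
  assume xy: "x \<in> {0..1}" "y \<in> {0..1}" "x \<le> y"
  consider "x = 0" | "0 < x" "y \<le> 1/2" | "x \<le> 1/2" "1/2 < y" | "1/2 < x"
    using xy by fastforce
  then show "interrobang_op g x \<le> interrobang_op g y"
  proof cases
    case 1
    then show ?thesis using xy interrobang_op_le_half_range[OF g] interrobang_op_gt_half_range[OF g]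
      by (cases "y \<le> 1/2") (auto intro: order_trans[of _ "1/16"])
  next
    case 2
    then have x: "0 < x" "x \<le> 1/2" and y: "0 < y" "y \<le> 1/2" using xy by auto
    have floor_le: "\<lfloor>1/y\<rfloor> \<le> \<lfloor>1/x\<rfloor>" using x xy by (intro floor_mono) (simp add: frac_le)
    show ?thesis
    proof (cases "\<lfloor>1/y\<rfloor> = \<lfloor>1/x\<rfloor>")
      case True
      have "frac (1/y) \<le> frac (1/x)" using True x xy by (simp add: frac_def frac_le)
      then have "g (frac (1/y)) \<le> g (frac (1/x))"
        using g(2) frac_in_unit_interval by (blast intro: mono_onD)
      then show ?thesis
        using interrobang_op_le_half[OF x] interrobang_op_le_half[OF y] True
        by (simp add: mult_left_mono)
    next
      case False
      then have "(4::real) powr (- real_of_int \<lfloor>1/x\<rfloor>) \<le> 4 powr (- real_of_int (\<lfloor>1/y\<rfloor> + 1))"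
        using floor_le by (intro four_powr_neg_mono) simp
      then show ?thesis
        using interrobang_op_le_half_bounds[OF g x] interrobang_op_le_half_bounds[OF g y] by linarith
    qed
  next
    case 3
    then show ?thesis
      using xy interrobang_op_le_half_range[OF g] interrobang_op_gt_half_range[OF g] by force
  next
    case 4
    then have "1/y - 1 \<in> {0..1}" "1/x - 1 \<in> {0..1}" "1/y - 1 \<le> 1/x - 1"
      using xy by (auto simp: field_simps)
    then have "g (1/y - 1) \<le> g (1/x - 1)" "g (1 - y) \<le> g (1 - x)"
      using g(2) xy by (auto intro: mono_onD)
    then show ?thesis using 4 xy interrobang_op_gt_half[of _ g] by simp
  qed
qed

lemma continuous_on_interrobang_op_piece:
  fixes n :: nat
  assumes g: "anchored g" "continuous_on {0..1} g" and n: "n \<ge> 2"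
  shows "continuous_on {1/(real n + 1)..1/real n} (interrobang_op g)"
proof (rule continuous_on_eq)
  let ?I = "{1/(real n + 1)..1/real n}"
  have "continuous_on ?I (\<lambda>x. 1/x - real n)"
    using inverse_piece_bounds(1)[of n] n by (intro continuous_intros) auto
  then have "continuous_on ?I (\<lambda>x. g (1/x - real n))"
    using inverse_piece_bounds[of n] n by (intro continuous_on_compose2[OF g(2)]) auto
  then show "continuous_on ?I (\<lambda>x. 4 powr (- real n) * (1 - 2 * g (1/x - real n)))"
    by (intro continuous_intros)
  show "\<And>x. x \<in> ?I \<Longrightarrow> 4 powr (- real n) * (1 - 2 * g (1/x - real n)) = interrobang_op g x"
    using interrobang_op_on_piece[of g n] g n by (simp add: anchored_def)
qed

lemma continuous_on_interrobang_op_ge_half: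
  assumes g: "anchored g" "continuous_on {0..1} g"
  shows "continuous_on {1/2..1} (interrobang_op g)"
proof (rule continuous_on_eq)
  have "continuous_on {1/2..1} (\<lambda>x. g (1/x - 1))"
    by (intro continuous_on_compose2[OF g(2)] continuous_intros) (auto simp: field_simps)
  moreover have "continuous_on {1/2..1} (\<lambda>x. g (1 - x))"
    by (intro continuous_on_compose2[OF g(2)] continuous_intros) auto
  ultimately show "continuous_on {1/2..1} (\<lambda>x. 3/8 - 3/4 * g (1/x - 1) - 1/2 * g (1 - x))"
    by (intro continuous_intros)
qed (use interrobang_op_ge_half[OF g(1)] in auto)

lemma continuous_on_interrobang_op_away_from_0:
  fixes n :: nat
  assumes g: "anchored g" "continuous_on {0..1} g" and "n \<ge> 1"
  shows "continuous_on {1/(real n + 1)..1} (interrobang_op g)"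
  using \<open>n \<ge> 1\<close>
proof (induction n rule: nat_induct_at_least)
  case base
  then show ?case using continuous_on_interrobang_op_ge_half[OF g] by simp
next
  case (Suc n)
  have eq: "real (Suc n) = real n + 1" by simp
  have "continuous_on {1/(real n + 1 + 1)..1/(real n + 1)} (interrobang_op g)"
    using continuous_on_interrobang_op_piece[OF g, of "Suc n"] Suc.hyps unfolding eq by simp
  moreover have "{1/(real n + 1 + 1)..1/(real n + 1)} \<union> {1/(real n + 1)..1} = {1/(real n + 1 + 1)..1}"
    by (rule ivl_disj_un_two_touch(4)) (simp_all add: frac_le)
  ultimately show ?case
    unfolding eq using continuous_on_closed_Un[OF _ _ _ Suc.IH] by (metis closed_atLeastAtMost)
qed

lemma continuous_at_0_interrobang_op:
  assumes g: "anchored g" "mono_on {0..1} g"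
  shows "continuous (at 0 within {0..1}) (interrobang_op g)"
proof -
  have "\<bar>interrobang_op g y\<bar> \<le> y" if y: "y \<in> {0..1}" for y
  proof (cases "y \<le> 1/2")
    case True
    show ?thesis
    proof (cases "y = 0")
      case False
      then have "0 < y" using y by simp
      then have "0 \<le> interrobang_op g y" "interrobang_op g y \<le> 4 powr (- real_of_int \<lfloor>1/y\<rfloor>)"
        using True interrobang_op_le_half_range(1)[OF g] interrobang_op_le_half_bounds(2)[OF g]
        by auto
      then show ?thesis using four_powr_neg_floor_inverse_less[OF \<open>0 < y\<close>] by simp
    qed simp
  qed (use y interrobang_op_gt_half_range[OF g, of y] in auto)
  then have "\<forall>\<^sub>F y in at 0 within {0..1}. norm (interrobang_op g y) \<le> y"
    by (auto simp: eventually_at_filter)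
  moreover have "((\<lambda>y. y) \<longlongrightarrow> 0) (at 0 within {0..1})" by (rule tendsto_ident_at)
  ultimately have "(interrobang_op g \<longlongrightarrow> 0) (at 0 within {0..1})" by (rule Lim_null_comparison)
  then show ?thesis by (simp add: continuous_within)
qed

lemma continuous_on_interrobang_op:
  assumes "admissible g"
  shows "continuous_on {0..1} (interrobang_op g)"
  unfolding continuous_on_eq_continuous_within
proof
  fix x :: real
  assume x: "x \<in> {0..1}"
  have g: "anchored g" "mono_on {0..1} g" "continuous_on {0..1} g"
    using assms by (auto simp: admissible_def)
  show "continuous (at x within {0..1}) (interrobang_op g)"
  proof (cases "x = 0")
    case False
    then have "0 < x" "x \<le> 1" using x by auto
    then obtain n :: nat where n: "n \<ge> 1" "1/(real n + 1) < x"
      by (rule obtain_inverse_piece)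
    show ?thesis
      by (rule continuous_within_if_continuous_on_nhd
          [OF continuous_on_interrobang_op_away_from_0[OF g(1,3) n(1)], of _ "{1/(real n + 1)<..}"])
        (use x n(2) in auto)
  qed (use continuous_at_0_interrobang_op[OF g(1,2)] in simp)
qed

lemma admissible_interrobang_op: "admissible g \<Longrightarrow> admissible (interrobang_op g)"
  using anchored_interrobang_op mono_on_interrobang_op continuous_on_interrobang_op
  by (auto simp: admissible_def anchored_def)

lemma interrobang_op_tendsto:
  assumes lim: "\<And>y. y \<in> {0..1} \<Longrightarrow> (\<lambda>k. g k y) \<longlonglongrightarrow> h y" and x: "x \<in> {0..1}"
  shows "(\<lambda>k. interrobang_op (g k) x) \<longlonglongrightarrow> interrobang_op h x"
proof -
  consider "x = 0" | "0 < x" "x \<le> 1/2" | "1/2 < x" "x \<le> 1" using x by fastforce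
  then show ?thesis
  proof cases
    case 2
    then show ?thesis
      unfolding interrobang_op_le_half[OF 2]
      by (intro tendsto_intros lim frac_in_unit_interval)
  next
    case 3
    then have "1/x - 1 \<in> {0..1}" "1 - x \<in> {0..1}" by (auto simp: field_simps)
    then show ?thesis unfolding interrobang_op_gt_half[OF 3] by (intro tendsto_intros lim)
  qed simp
qed

text \<open>The weight 1/4 on [0,1/2] is what makes the second branch contract: there the
  argument \<open>1 - x\<close> lies in [0,1/2).\<close>

lemma interrobang_op_contraction:
  assumes dist: "\<And>y. y \<in> {0..1} \<Longrightarrow> \<bar>g y - h y\<bar> \<le> c * (if y \<le> 1/2 then 1/4 else 1)"
    and x: "x \<in> {0..1}"
  shows "\<bar>interrobang_op g x - interrobang_op h x\<bar> \<le> 7/8 * c * (if x \<le> 1/2 then 1/4 else 1)"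
proof -
  have "\<bar>g 0 - h 0\<bar> \<le> c / 4" using dist[of 0] by simp
  then have c: "0 \<le> c" using abs_ge_zero[of "g 0 - h 0"] by linarith
  have dist_le_c: "\<bar>g y - h y\<bar> \<le> c" if "y \<in> {0..1}" for y
    using dist[OF that] c by (cases "y \<le> 1/2") auto
  consider "x = 0" | "0 < x" "x \<le> 1/2" | "1/2 < x" "x \<le> 1" using x by fastforce
  then show ?thesis
  proof cases
    case 1
    then show ?thesis using c by simp
  next
    case 2
    define p where "p = (4::real) powr (- real_of_int \<lfloor>1/x\<rfloor>)"
    have p: "0 < p" "p \<le> 1/16"
      unfolding p_def using four_powr_neg_le_1_16 floor_inverse_ge_2[OF 2] by auto
    have "interrobang_op g x - interrobang_op h x = - 2 * p * (g (frac (1/x)) - h (frac (1/x)))"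
      by (simp add: interrobang_op_le_half[OF 2] p_def algebra_simps)
    then have "\<bar>interrobang_op g x - interrobang_op h x\<bar> = 2 * p * \<bar>g (frac (1/x)) - h (frac (1/x))\<bar>"
      using p by (simp add: abs_mult)
    also have "\<dots> \<le> 2 * (1/16) * c"
      using p dist_le_c[OF frac_in_unit_interval] c by (intro mult_mono) auto
    finally show ?thesis using 2 c by simp
  next
    case 3
    have "1/x - 1 \<in> {0..1}" "1 - x \<in> {0..1}" "1 - x \<le> 1/2" using 3 by (auto simp: field_simps)
    then have A: "\<bar>g (1/x - 1) - h (1/x - 1)\<bar> \<le> c" and B: "\<bar>g (1 - x) - h (1 - x)\<bar> \<le> c / 4"
      using dist_le_c dist[of "1 - x"] by auto
    have tri: "\<bar>- (3/4 * a + 1/2 * b)\<bar> \<le> 3/4 * \<bar>a\<bar> + 1/2 * \<bar>b\<bar>" for a b :: real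
      by (auto simp: abs_if)
    have "interrobang_op g x - interrobang_op h x
        = - (3/4 * (g (1/x - 1) - h (1/x - 1)) + 1/2 * (g (1 - x) - h (1 - x)))"
      by (simp add: interrobang_op_gt_half[OF 3] algebra_simps)
    then have "\<bar>interrobang_op g x - interrobang_op h x\<bar>
        \<le> 3/4 * \<bar>g (1/x - 1) - h (1/x - 1)\<bar> + 1/2 * \<bar>g (1 - x) - h (1 - x)\<bar>"
      by (simp only: tri)
    then show ?thesis using A B 3 by simp
  qed
qed

section \<open>Construction of a fixed point\<close>

lemma admissible_iterate: "admissible g \<Longrightarrow> admissible ((interrobang_op ^^ k) g)"
  by (induction k) (simp_all add: admissible_interrobang_op)

lemma admissible_cubic: "admissible (\<lambda>x. x^2/8 + x^3/4)"
proof -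
  have "mono_on {0..1} (\<lambda>x::real. x^2/8 + x^3/4)"
    by (intro mono_onI add_mono divide_right_mono power_mono) auto
  moreover have "continuous_on {0..1} (\<lambda>x::real. x^2/8 + x^3/4)" by (intro continuous_intros) auto
  ultimately show ?thesis by (simp add: admissible_def anchored_def power2_eq_square power3_eq_cube)
qed

lemma interrobang_op_iterate_diff_bound:
  assumes g: "admissible g" and x: "x \<in> {0..1}"
  shows "\<bar>(interrobang_op ^^ Suc k) g x - (interrobang_op ^^ k) g x\<bar>
    \<le> 3/2 * (7/8)^k * (if x \<le> 1/2 then 1/4 else 1)"
  using x
proof (induction k arbitrary: x)
  case 0
  have "anchored g" "mono_on {0..1} g" "anchored (interrobang_op g)" "mono_on {0..1} (interrobang_op g)"
    using g admissible_interrobang_op[OF g] by (auto simp: admissible_def)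
  then have "\<bar>interrobang_op g x - g x\<bar> \<le> 3/8"
    using anchored_mono_on_range[OF _ _ "0.prems", of g] anchored_mono_on_range[OF _ _ "0.prems", of "interrobang_op g"]
    unfolding abs_le_iff by auto
  then show ?case by auto
next
  case (Suc k)
  have "\<bar>interrobang_op ((interrobang_op ^^ Suc k) g) x - interrobang_op ((interrobang_op ^^ k) g) x\<bar>
      \<le> 7/8 * (3/2 * (7/8)^k) * (if x \<le> 1/2 then 1/4 else 1)"
    by (rule interrobang_op_contraction[OF Suc.IH Suc.prems])
  then show ?case by (simp add: algebra_simps)
qed

locale interrobang_fixpoint =
  fixes F :: "real \<Rightarrow> real"
  assumes mono_F: "mono_on {0..1} F"
    and fixed: "x \<in> {0..1} \<Longrightarrow> interrobang_op F x = F x"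

lemma interrobang_op_iterates_converge:
  assumes g: "admissible g"
  obtains F where "uniform_limit {0..1} (\<lambda>k. (interrobang_op ^^ k) g) F sequentially"
    "continuous_on {0..1} F" "interrobang_fixpoint F"
proof -
  define G where "G k = (interrobang_op ^^ k) g" for k
  have adm: "admissible (G k)" for k
    unfolding G_def by (rule admissible_iterate[OF g])
  have step: "norm (G (Suc k) x - G k x) \<le> 3/2 * (7/8)^k" if "x \<in> {0..1}" for k x
  proof -
    have "3/2 * (7/8)^k * (if x \<le> 1/2 then 1/4 else 1) \<le> (3/2 * (7/8)^k :: real)" by auto
    with interrobang_op_iterate_diff_bound[OF g that, of k] show ?thesis
      unfolding G_def real_norm_def by (rule order_trans)
  qed
  moreover have "summable (\<lambda>k. 3/2 * (7/8::real)^k)" by (intro summable_mult summable_geometric) simp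
  ultimately have "uniformly_convergent_on {0..1} G"
    by (rule uniformly_convergent_on_if_summable_increments[where M = "\<lambda>k. 3/2 * (7/8)^k"])
  then obtain F where F: "uniform_limit {0..1} G F sequentially"
    unfolding uniformly_convergent_on_def by blast
  then have lim: "(\<lambda>k. G k x) \<longlonglongrightarrow> F x" if "x \<in> {0..1}" for x
    using that by (rule tendsto_uniform_limitI)
  have cont: "continuous_on {0..1} F"
    by (rule uniform_limit_theorem[OF _ F]) (use adm in \<open>auto simp: admissible_def\<close>)
  have "mono_on {0..1} F"
  proof (rule mono_onI)
    fix x y :: real assume xy: "x \<in> {0..1}" "y \<in> {0..1}" "x \<le> y"
    have "G k x \<le> G k y" for k using adm[of k] xy by (auto simp: admissible_def intro: mono_onD)
    then show "F x \<le> F y" using xy by (intro LIMSEQ_le[OF lim lim]) auto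
  qed
  moreover have "interrobang_op F x = F x" if x: "x \<in> {0..1}" for x
  proof -
    have "(\<lambda>k. G (Suc k) x) \<longlonglongrightarrow> interrobang_op F x"
      using interrobang_op_tendsto[OF lim x] by (simp add: G_def)
    then show ?thesis using LIMSEQ_Suc[OF lim[OF x]] LIMSEQ_unique by blast
  qed
  ultimately have "interrobang_fixpoint F" by (rule interrobang_fixpoint.intro)
  with F cont show ?thesis unfolding G_def[abs_def] by (rule that)
qed

section \<open>Monotone fixed points\<close>

context interrobang_fixpoint
begin

lemma F_0: "F 0 = 0"
  using fixed[of 0] by simp

lemma anchored_F: "anchored F"
  using anchored_interrobang_op[of F] fixed[of "1/2"] fixed[of 1] F_0 by (simp add: anchored_def)

lemma F_on_piece:
  fixes n :: nat
  assumes "n \<ge> 2" "1/(real n + 1) \<le> x" "x \<le> 1/real n"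
  shows "F x = 4 powr (- real n) * (1 - 2 * F (1/x - real n))"
proof -
  have "x \<in> {0..1}"
    using inverse_piece_bounds(1)[of n x] assms order_trans[OF assms(3), of 1] by auto
  then show ?thesis
    using fixed interrobang_op_on_piece[of F n x] anchored_F assms by (simp add: anchored_def)
qed

lemma F_le_half:
  "0 < x \<Longrightarrow> x \<le> 1/2 \<Longrightarrow> F x = 4 powr (- real_of_int \<lfloor>1 / x\<rfloor>) * (1 - 2 * F (frac (1 / x)))"
  using fixed[of x] interrobang_op_le_half[of x F] by simp

lemma F_ge_half: "1/2 \<le> x \<Longrightarrow> x \<le> 1 \<Longrightarrow> F x = 3/8 - 3/4 * F (1/x - 1) - 1/2 * F (1 - x)"
  using fixed[of x] interrobang_op_ge_half[OF anchored_F] by simp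

lemma F_pos:
  assumes "0 < x" "x \<le> 1"
  shows "0 < F x"
proof (cases "x \<le> 1/2")
  case True
  have "0 < 4 powr (- real_of_int (\<lfloor>1/x\<rfloor> + 1))" by simp
  also have "\<dots> \<le> interrobang_op F x"
    by (rule interrobang_op_le_half_bounds(1)[OF anchored_F mono_F assms(1) True])
  also have "\<dots> = F x" using fixed assms by simp
  finally show ?thesis .
next
  case False
  then have "F (1/2) \<le> F x" using mono_onD[OF mono_F] assms by simp
  then show ?thesis using anchored_F by (simp add: anchored_def)
qed

lemma F_less_3_8:
  assumes "0 \<le> x" "x < 1"
  shows "F x < 3/8"
proof (cases "x \<le> 1/2")
  case True
  then have "F x \<le> 1/16"
    using interrobang_op_le_half_range(2)[OF anchored_F mono_F assms(1) True] fixed[of x] assms by simp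
  then show ?thesis by simp
next
  case False
  have "0 \<le> F (1/x - 1)"
    using anchored_mono_on_range(1)[OF anchored_F mono_F] False assms by (auto simp: field_simps)
  moreover have "0 < F (1 - x)" using F_pos assms by simp
  ultimately show ?thesis using F_ge_half[of x] False assms by simp
qed

definition flat :: "real \<Rightarrow> real \<Rightarrow> bool" where
  "flat a b \<longleftrightarrow> 0 \<le> a \<and> a < b \<and> b \<le> 1 \<and> F a = F b"

lemma flat_const: "flat a b \<Longrightarrow> a \<le> c \<Longrightarrow> c \<le> b \<Longrightarrow> F c = F a"
  unfolding flat_def using mono_onD[OF mono_F, of a c] mono_onD[OF mono_F, of c b] by force

text \<open>On a piece [1/(n+1),1/n] the value \<open>F x\<close> is an injective function of \<open>F (1/x - n)\<close>,
  and \<open>x \<mapsto> 1/x - n\<close> stretches [a,b] by the factor 1/(ab) \<open>\<ge>\<close> 4. A flat interval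
  containing an endpoint 1/(n+1) in its interior is impossible, as it would force
  \<open>F (1/b - n) = F 1\<close>.\<close>
lemma flat_le_half_expand:
  assumes ab: "flat a b" and b: "b \<le> 1/2"
  shows "\<exists>a' b'. flat a' b' \<and> 4 * (b - a) \<le> b' - a'"
proof -
  have a: "0 \<le> a" "a < b" "F a = F b" using ab by (auto simp: flat_def)
  then have "0 < b" by simp
  then obtain n :: nat where n: "\<lfloor>1/b\<rfloor> = int n" "1/(real n + 1) < b" "b \<le> 1/real n"
    using b by (elim obtain_inverse_piece) auto
  have n2: "n \<ge> 2" using floor_inverse_ge_2[OF \<open>0 < b\<close> b] n(1) by simp
  have b_img: "0 \<le> 1/b - real n" "1/b - real n < 1"
    using inverse_piece_bounds(2)[of n b] n n2 floor_correct[of "1/b"] by auto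
  have F_b: "F b = 4 powr (- real n) * (1 - 2 * F (1/b - real n))"
    using F_on_piece n n2 by simp
  show ?thesis
  proof (cases "1/(real n + 1) \<le> a")
    case True
    have "F a = 4 powr (- real n) * (1 - 2 * F (1/a - real n))"
      using F_on_piece[OF n2 True] a n by simp
    then have "F (1/b - real n) = F (1/a - real n)" using F_b a by simp
    moreover have "0 < a" by (rule less_le_trans[OF _ True]) simp
    moreover have "1/a - real n \<le> 1" using inverse_piece_bounds(3)[OF _ True] a n n2 by simp
    ultimately have "flat (1/b - real n) (1/a - real n)"
      using b_img a by (simp add: flat_def frac_less2)
    moreover have "4 * (b - a) \<le> (1/a - real n) - (1/b - real n)"
    proof -
      have "a * b \<le> 1/4" using a b mult_mono[of a "1/2" b "1/2"] by simp
      then have "(b - a) / (1/4) \<le> (b - a) / (a * b)"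
        using \<open>0 < a\<close> a by (intro divide_left_mono) auto
      then show ?thesis using \<open>0 < a\<close> \<open>0 < b\<close> by (simp add: field_simps)
    qed
    ultimately show ?thesis by blast
  next
    case False
    have "F (1/(real n + 1)) = F b"
      using flat_const[OF ab, of "1/(real n + 1)"] False n a by simp
    moreover have "F (1/(real n + 1)) = 4 powr (- real n) * (1 - 2 * F 1)"
      using F_on_piece[OF n2, of "1/(real n + 1)"] n2 by (simp add: frac_le)
    ultimately have "F (1/b - real n) = F 1" using F_b by simp
    then show ?thesis using F_less_3_8[OF b_img] anchored_F by (simp add: anchored_def)
  qed
qed

lemma flat_ge_half_reflect:
  assumes ab: "flat a b" and a: "1/2 \<le> a"
  shows "flat (1 - b) (1 - a)"
proof -
  have ab': "a < b" "b \<le> 1" "F a = F b" using ab by (auto simp: flat_def)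
  have "1/b - 1 \<in> {0..1}" "1/a - 1 \<in> {0..1}" "1/b - 1 \<le> 1/a - 1"
    using a ab' by (auto simp: field_simps)
  then have "F (1/b - 1) \<le> F (1/a - 1)" "F (1 - b) \<le> F (1 - a)"
    using mono_onD[OF mono_F] a ab' by auto
  moreover have "3/4 * F (1/a - 1) + 1/2 * F (1 - a) = 3/4 * F (1/b - 1) + 1/2 * F (1 - b)"
    using F_ge_half[of a] F_ge_half[of b] a ab' by simp
  ultimately have "F (1 - b) = F (1 - a)" by linarith
  then show ?thesis using a ab' by (simp add: flat_def)
qed

text \<open>An interval straddling 1/2 has a flat half of at least half its length on one side.\<close>
lemma flat_expand:
  assumes ab: "flat a b"
  shows "\<exists>a' b'. flat a' b' \<and> 2 * (b - a) \<le> b' - a'"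
proof -
  have a: "0 \<le> a" "a < b" "b \<le> 1" "F a = F b" using ab by (auto simp: flat_def)
  consider "b \<le> 1/2" | "1/2 \<le> a" | "a < 1/2" "1/2 < b" "b - 1/2 \<le> 1/2 - a"
    | "a < 1/2" "1/2 < b" "1/2 - a < b - 1/2" by fastforce
  then show ?thesis
  proof cases
    case 1
    then obtain a' b' where "flat a' b'" "4 * (b - a) \<le> b' - a'"
      using flat_le_half_expand[OF ab] by blast
    then show ?thesis using a by (intro exI[of _ a'] exI[of _ b']) auto
  next
    case 2
    then obtain a' b' where "flat a' b'" "4 * ((1 - a) - (1 - b)) \<le> b' - a'"
      using flat_le_half_expand[OF flat_ge_half_reflect[OF ab]] a by auto
    then show ?thesis using a by (intro exI[of _ a'] exI[of _ b']) auto
  next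
    case 3
    then have "flat a (1/2)" using flat_const[OF ab, of "1/2"] a by (simp add: flat_def)
    then obtain a' b' where "flat a' b'" "4 * (1/2 - a) \<le> b' - a'"
      using flat_le_half_expand by blast
    then show ?thesis using 3 by (intro exI[of _ a'] exI[of _ b']) auto
  next
    case 4
    then have "flat (1/2) b" using flat_const[OF ab, of "1/2"] a by (simp add: flat_def)
    then have "flat (1 - b) (1/2)" using flat_ge_half_reflect[of "1/2" b] by simp
    then obtain a' b' where "flat a' b'" "4 * (1/2 - (1 - b)) \<le> b' - a'"
      using flat_le_half_expand by blast
    then show ?thesis using 4 by (intro exI[of _ a'] exI[of _ b']) auto
  qed
qed

lemma not_flat: "\<not> flat a b"
proof
  assume ab: "flat a b"
  have expand: "\<exists>a' b'. flat a' b' \<and> 2^k * (b - a) \<le> b' - a'" for k :: nat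
  proof (induction k)
    case (Suc k)
    then obtain a' b' where "flat a' b'" "2^k * (b - a) \<le> b' - a'" by blast
    moreover obtain a'' b'' where "flat a'' b''" "2 * (b' - a') \<le> b'' - a''"
      using flat_expand[OF \<open>flat a' b'\<close>] by blast
    ultimately show ?case by (intro exI[of _ a''] exI[of _ b'']) auto
  qed (use ab in auto)
  obtain k :: nat where "1/(b - a) < 2^k" using real_arch_pow[of 2 "1/(b - a)"] by auto
  then have "1 < 2^k * (b - a)" using ab by (simp add: flat_def field_simps)
  moreover obtain a' b' where "flat a' b'" "2^k * (b - a) \<le> b' - a'" using expand by blast
  ultimately show False by (simp add: flat_def)
qed

lemma strict_mono_on_F: "strict_mono_on {0..1} F"
proof (rule strict_mono_onI)
  fix x y :: real assume "x \<in> {0..1}" "y \<in> {0..1}" "x < y"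
  then show "F x < F y" using mono_onD[OF mono_F, of x y] not_flat[of x y] by (auto simp: flat_def)
qed

lemma F_of_rat: "0 \<le> q \<Longrightarrow> q \<le> 1 \<Longrightarrow> F (of_rat q) = interrobang_rat q"
proof (induction q rule: interrobang_rat.induct)
  case (1 q)
  consider "q = 0" | "0 < q" "q \<le> 1/2" | "1/2 < q" "q \<le> 1" using "1.prems" by fastforce
  then show ?case
  proof cases
    case 1
    then show ?thesis using anchored_F by (simp add: anchored_def)
  next
    case 2
    have x: "0 < (of_rat q :: real)" "(of_rat q :: real) \<le> 1/2"
      using 2 of_rat_less_eq[of q "1/2"] by (auto simp: of_rat_divide)
    have "F (of_rat (frac (1/q))) = interrobang_rat (frac (1/q))"
      using "1.IH"(1) 2 frac_lt_1[of "1/q"] by (simp add: frac_ge_0 less_imp_le)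
    moreover have "\<lfloor>1 / (of_rat q :: real)\<rfloor> = \<lfloor>1/q\<rfloor>"
      by (metis of_rat_floor of_rat_1 of_rat_divide)
    moreover have "frac (of_rat r :: real) = of_rat (frac r)" for r
      by (simp add: frac_def of_rat_diff)
    then have "frac (1 / (of_rat q :: real)) = of_rat (frac (1/q))"
      using of_rat_divide[of 1 q] by (metis of_rat_1)
    ultimately show ?thesis
      using fixed[of "of_rat q"] interrobang_op_le_half[OF x, of F] x 2
      by (subst interrobang_rat.simps) simp
  next
    case 3
    have x: "1/2 < (of_rat q :: real)" "(of_rat q :: real) \<le> 1"
      using 3 of_rat_less[of "1/2" q] by (auto simp: of_rat_divide)
    have "F (of_rat (1/q - 1)) = interrobang_rat (1/q - 1)"
      using "1.IH"(2) 3 by (simp add: field_simps)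
    moreover have "F (of_rat (1 - q)) = interrobang_rat (1 - q)"
      using "1.IH"(3) 3 by simp
    ultimately show ?thesis
      using fixed[of "of_rat q"] interrobang_op_gt_half[OF x, of F] x 3
      by (subst interrobang_rat.simps) (simp add: of_rat_diff of_rat_divide)
  qed
qed

end

theorem mainTheorem13:
  shows "\<exists>f :: real \<Rightarrow> real.
    continuous_on {0..1} f \<and> strict_mono_on {0..1} f \<and>
    (\<forall>q :: rat. 0 \<le> q \<and> q \<le> 1 \<longrightarrow> f (of_rat q) = interrobang_rat q) \<and>
    (\<forall>g :: real \<Rightarrow> real. continuous_on {0..1} g \<and> strict_mono_on {0..1} g \<and>
        (\<forall>q :: rat. 0 \<le> q \<and> q \<le> 1 \<longrightarrow> g (of_rat q) = interrobang_rat q)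
        \<longrightarrow> (\<forall>x \<in> {0..1}. g x = f x)) \<and>
    f 0 = 0 \<and>
    (\<forall>x :: real. 0 < x \<and> x \<le> 1/2 \<longrightarrow>
        f x = 4 powr (- real_of_int \<lfloor>1 / x\<rfloor>) * (1 - 2 * f (frac (1 / x)))) \<and>
    (\<forall>x :: real. 1/2 < x \<and> x \<le> 1 \<longrightarrow>
        f x = 3/8 - 3/4 * f (1 / x - 1) - 1/2 * f (1 - x))"
proof -
  obtain F where cont: "continuous_on {0..1} F" and F: "interrobang_fixpoint F"
    using interrobang_op_iterates_converge[OF admissible_cubic] by blast
  interpret interrobang_fixpoint F by (rule F)
  have unique: "g x = F x"
    if "continuous_on {0..1} g" "\<forall>q. 0 \<le> q \<and> q \<le> 1 \<longrightarrow> g (of_rat q) = interrobang_rat q"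
      "x \<in> {0..1}" for g x
  proof (rule continuous_on_Icc_eq_if_eq_on_rats[OF zero_less_one that(1) cont _ that(3)])
    fix q :: rat assume "0 \<le> (of_rat q :: real)" "(of_rat q :: real) \<le> 1"
    then show "g (of_rat q) = F (of_rat q)" using that(2) F_of_rat by simp
  qed
  show ?thesis
  proof (intro exI[of _ F] conjI allI impI ballI)
    fix g :: "real \<Rightarrow> real" and x :: real
    assume "continuous_on {0..1} g \<and> strict_mono_on {0..1} g \<and>
      (\<forall>q. 0 \<le> q \<and> q \<le> 1 \<longrightarrow> g (of_rat q) = interrobang_rat q)" "x \<in> {0..1}"
    then show "g x = F x" using unique by blast
  qed (use cont strict_mono_on_F F_of_rat F_0 F_le_half F_ge_half in simp_all)
qed

end
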